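(* Assume the setting of the context. There exists $N$ such that every walk of length at least $N$ in $G(\sigma)$ ends at a singleton vertex if and only if the sequence $x$ is periodic.
   Context: Let $\sigma:\mathcal A^*\to\mathcal A^*$ be a primitive substitution of constant length $l\ge2$ and $x\in\mathcal A^{\mathbb Z}$ an admissible two-sided fixed point of $\sigma$ (so $x_{lj+i}=\sigma(x_j)_i$, $w_i$ being the $i$-th letter of $w$ indexed from $0$); $x$ is not assumed non-periodic here. Height $h=\max\{n\ge1 : \gcd(n,l)=1,\ n\mid g_0\}$, $g_0=\gcd\{n\ge1:x_n=x_0\}$. For $0\le i<h$, $\mathcal A_i=\{x_{i+nh}:n\in\mathbb Z\}$. Graph $G(\sigma)$: vertices are subsets of $\mathcal A$; for a subset $\mathcal C$ and $0\le i<l$ there is an edge labelled $i$ from $\mathcal C$ to $\{\sigma(b)_i : b\in\mathcal C\}$; $G(\sigma)$ is restricted to vertices reachable from $\mathcal A_0,\dots,\mathcal A_{h-1}$. $x$ is periodic if $x_{n+q}=x_n$ for all $n$ for some $q\ge1$. *)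

theory Defs
  imports Main
begin

definition subst_word :: "('a \<Rightarrow> 'a list) \<Rightarrow> 'a list \<Rightarrow> 'a list" where
  "subst_word \<sigma> w = concat (map \<sigma> w)"

definition subst_iter :: "('a \<Rightarrow> 'a list) \<Rightarrow> nat \<Rightarrow> 'a \<Rightarrow> 'a list" where
  "subst_iter \<sigma> k a = (subst_word \<sigma> ^^ k) [a]"

definition constant_length :: "('a \<Rightarrow> 'a list) \<Rightarrow> nat \<Rightarrow> bool" where
  "constant_length \<sigma> l \<longleftrightarrow> (\<forall>a. length (\<sigma> a) = l)"

definition primitive :: "('a \<Rightarrow> 'a list) \<Rightarrow> bool" where
  "primitive \<sigma> \<longleftrightarrow> (\<exists>k\<ge>1. \<forall>a b. b \<in> set (subst_iter \<sigma> k a))"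

definition is_factor :: "'a list \<Rightarrow> 'a list \<Rightarrow> bool" where
  "is_factor w s \<longleftrightarrow> (\<exists>u v. s = u @ w @ v)"

definition in_language :: "('a \<Rightarrow> 'a list) \<Rightarrow> 'a list \<Rightarrow> bool" where
  "in_language \<sigma> w \<longleftrightarrow> (\<exists>k a. is_factor w (subst_iter \<sigma> k a))"

definition seq_word :: "(int \<Rightarrow> 'a) \<Rightarrow> int \<Rightarrow> nat \<Rightarrow> 'a list" where
  "seq_word x m n = map (\<lambda>k. x (m + int k)) [0..<n]"

definition two_sided_fixed_point :: "('a \<Rightarrow> 'a list) \<Rightarrow> nat \<Rightarrow> (int \<Rightarrow> 'a) \<Rightarrow> bool" where
  "two_sided_fixed_point \<sigma> l x \<longleftrightarrow>
     (\<forall>j::int. \<forall>i<l. x (int l * j + int i) = \<sigma> (x j) ! i)"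

definition admissible :: "('a \<Rightarrow> 'a list) \<Rightarrow> (int \<Rightarrow> 'a) \<Rightarrow> bool" where
  "admissible \<sigma> x \<longleftrightarrow> (\<forall>m n. in_language \<sigma> (seq_word x m n))"

definition g0 :: "(int \<Rightarrow> 'a) \<Rightarrow> nat" where
  "g0 x = Gcd {n::nat. n \<ge> 1 \<and> x (int n) = x 0}"

definition height :: "nat \<Rightarrow> (int \<Rightarrow> 'a) \<Rightarrow> nat" where
  "height l x = Max {n::nat. n \<ge> 1 \<and> gcd n l = 1 \<and> n dvd g0 x}"

definition letter_class :: "(int \<Rightarrow> 'a) \<Rightarrow> nat \<Rightarrow> nat \<Rightarrow> 'a set" where
  "letter_class x h i = {x (int i + n * int h) | n. True}"

definition edge_target :: "('a \<Rightarrow> 'a list) \<Rightarrow> nat \<Rightarrow> 'a set \<Rightarrow> 'a set" where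
  "edge_target \<sigma> i C = (\<lambda>b. \<sigma> b ! i) ` C"

inductive_set graph_vertices :: "('a \<Rightarrow> 'a list) \<Rightarrow> nat \<Rightarrow> (int \<Rightarrow> 'a) \<Rightarrow> 'a set set"
  for \<sigma> l x where
  base: "i < height l x \<Longrightarrow> letter_class x (height l x) i \<in> graph_vertices \<sigma> l x"
| step: "C \<in> graph_vertices \<sigma> l x \<Longrightarrow> i < l \<Longrightarrow> edge_target \<sigma> i C \<in> graph_vertices \<sigma> l x"

definition is_walk :: "('a \<Rightarrow> 'a list) \<Rightarrow> nat \<Rightarrow> (int \<Rightarrow> 'a) \<Rightarrow> 'a set list \<Rightarrow> bool" where
  "is_walk \<sigma> l x p \<longleftrightarrow> p \<noteq> [] \<and> set p \<subseteq> graph_vertices \<sigma> l x \<and>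
     (\<forall>k. Suc k < length p \<longrightarrow> (\<exists>i<l. p ! Suc k = edge_target \<sigma> i (p ! k)))"

definition walk_length :: "'a set list \<Rightarrow> nat" where
  "walk_length p = length p - 1"

definition periodic :: "(int \<Rightarrow> 'a) \<Rightarrow> bool" where
  "periodic x \<longleftrightarrow> (\<exists>q::int\<ge>1. \<forall>n. x (n + q) = x n)"

end

theory Submission imports Defs begin

text \<open>
  Following the edges labelled by the base-\<open>l\<close> digits of \<open>r < l^k\<close> from \<open>\<A>\<^sub>i\<close> leads
  to the set of letters \<open>x\<^bsub>l^k j + r\<^esub>\<close> with \<open>j \<equiv> i (mod h)\<close>, and every vertex is of
  this form. So all vertices at depth \<open>N\<close> are singletons exactly when \<open>l^N h\<close> is a period
  of \<open>x\<close>, which gives one direction. Conversely, let \<open>P\<close> be the least period. If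
  \<open>x\<^sub>n = x\<^sub>0\<close>, the blocks \<open>\<sigma>\<^sup>P(x\<^sub>n)\<close> and \<open>\<sigma>\<^sup>P(x\<^sub>0)\<close> coincide and have length
  \<open>l^P > P\<close>, so \<open>l^P n\<close> is a period and \<open>P\<close> divides it. Hence the part of \<open>P\<close> coprime
  to \<open>l\<close> divides \<open>g\<^sub>0\<close>, so by maximality it divides \<open>h\<close>, while the rest divides
  \<open>l^P\<close>. Thus \<open>l^k h\<close> is a period for \<open>k \<ge> P\<close>, and walks of length \<open>\<ge> P\<close> end in
  singletons.
\<close>

section \<open>Iterates of a constant-length substitution\<close>

lemma nth_concat_map_constant_length:
  assumes "\<forall>a. length (\<sigma> a) = l" "r < length w" "j < l"
  shows "concat (map \<sigma> w) ! (l * r + j) = \<sigma> (w ! r) ! j"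
  using assms(2)
proof (induction w arbitrary: r)
  case Nil then show ?case by simp
next
  case (Cons a w)
  then show ?case
    using assms by (cases r) (simp_all add: nth_append add.assoc)
qed

lemma subst_iter_Suc: "subst_iter \<sigma> (Suc k) a = concat (map \<sigma> (subst_iter \<sigma> k a))"
  by (simp add: subst_iter_def subst_word_def)

lemma length_subst_iter: "constant_length \<sigma> l \<Longrightarrow> length (subst_iter \<sigma> k a) = l ^ k"
proof (induction k)
  case 0 then show ?case by (simp add: subst_iter_def)
next
  case (Suc k)
  have "length (concat (map \<sigma> w)) = l * length w" for w
    using Suc.prems by (induction w) (auto simp: constant_length_def)
  then show ?case using Suc by (simp add: subst_iter_Suc)
qed

lemma less_power_SucE:
  fixes l r :: nat
  assumes "l > 0" "r < l ^ Suc k"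
  obtains r' j where "r = l * r' + j" "r' < l ^ k" "j < l"
proof
  show "r = l * (r div l) + r mod l" by simp
  show "r div l < l ^ k" using assms by (simp add: less_mult_imp_div_less mult.commute)
  show "r mod l < l" using assms by simp
qed

lemma mult_add_less_power_Suc: "(r::nat) < l ^ k \<Longrightarrow> j < l \<Longrightarrow> l * r + j < l ^ Suc k"
proof -
  assume "r < l ^ k" "j < l"
  then have "l * r + j < l * (r + 1)" by simp
  also have "\<dots> \<le> l * l ^ k" using \<open>r < l ^ k\<close> by (intro mult_le_mono2) simp
  finally show ?thesis by simp
qed

lemma two_sided_fixed_point_subst_iter:
  assumes cl: "constant_length \<sigma> l" and fp: "two_sided_fixed_point \<sigma> l x" and "l > 0"
  shows "r < l ^ k \<Longrightarrow> x (int (l ^ k) * j + int r) = subst_iter \<sigma> k (x j) ! r"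
proof (induction k arbitrary: r)
  case 0 then show ?case by (simp add: subst_iter_def)
next
  case (Suc k)
  obtain r' d where r: "r = l * r' + d" "r' < l ^ k" "d < l"
    using less_power_SucE[OF \<open>l > 0\<close> Suc.prems] .
  have "int (l ^ Suc k) * j + int r = int l * (int (l ^ k) * j + int r') + int d"
    using r by (simp add: algebra_simps)
  then have "x (int (l ^ Suc k) * j + int r) = \<sigma> (x (int (l ^ k) * j + int r')) ! d"
    using fp \<open>d < l\<close> unfolding two_sided_fixed_point_def by simp
  also have "\<dots> = \<sigma> (subst_iter \<sigma> k (x j) ! r') ! d" using Suc.IH r by simp
  also have "\<dots> = subst_iter \<sigma> (Suc k) (x j) ! r"
    using nth_concat_map_constant_length[of \<sigma> l r' "subst_iter \<sigma> k (x j)" d] cl r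
    by (simp add: constant_length_def length_subst_iter subst_iter_Suc)
  finally show ?case .
qed

section \<open>Periods\<close>

definition is_period :: "(int \<Rightarrow> 'a) \<Rightarrow> nat \<Rightarrow> bool" where
  "is_period x t \<longleftrightarrow> (\<forall>m. x (m + int t) = x m)"

lemma periodic_if_is_period: "is_period x t \<Longrightarrow> t > 0 \<Longrightarrow> periodic x"
  unfolding periodic_def is_period_def by (intro exI[of _ "int t"]) auto

lemma is_period_shift:
  assumes "is_period x t"
  shows "x (m + c * int t) = x m"
proof (induction c rule: int_induct[where k = 0])
  case base then show ?case by simp
next
  case (step1 c)
  have "x (m + (c + 1) * int t) = x ((m + c * int t) + int t)" by (simp add: algebra_simps)
  then show ?case using assms step1.IH unfolding is_period_def by simp
next
  case (step2 c)
  have "x (m + c * int t) = x ((m + (c - 1) * int t) + int t)" by (simp add: algebra_simps)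
  then show ?case using assms step2.IH unfolding is_period_def by simp
qed

lemma is_period_multiple:
  assumes "is_period x t" "t dvd s"
  shows "is_period x s"
proof -
  obtain c where "s = t * c" using assms(2) by blast
  then show ?thesis
    using is_period_shift[OF assms(1), of _ "int c"] unfolding is_period_def by (simp add: mult.commute)
qed

lemma is_period_gcd:
  assumes "is_period x s" "is_period x t" "s \<noteq> 0"
  shows "is_period x (gcd s t)"
  unfolding is_period_def
proof
  fix m
  obtain u v where uv: "s * u = t * v + gcd s t" using bezout_nat[OF assms(3)] by blast
  have "x (m + int (gcd s t)) = x ((m + int (gcd s t)) + int v * int t)"
    using is_period_shift[OF assms(2)] by simp
  also have "\<dots> = x (m + int u * int s)" using uv by (simp add: algebra_simps flip: of_nat_mult)
  also have "\<dots> = x m" using is_period_shift[OF assms(1)] by simp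
  finally show "x (m + int (gcd s t)) = x m" .
qed

lemma periodic_least_period:
  assumes "periodic x"
  obtains P where "P \<ge> 1" "is_period x P" "\<And>t. t \<ge> 1 \<Longrightarrow> is_period x t \<Longrightarrow> P dvd t"
proof -
  obtain q :: int where "q \<ge> 1" "\<forall>n. x (n + q) = x n" using assms unfolding periodic_def by blast
  then have "nat q \<ge> 1 \<and> is_period x (nat q)" unfolding is_period_def by simp
  define P where "P = (LEAST t. t \<ge> 1 \<and> is_period x t)"
  have P: "P \<ge> 1" "is_period x P"
    using LeastI[where P = "\<lambda>t. t \<ge> 1 \<and> is_period x t", OF \<open>nat q \<ge> 1 \<and> _\<close>]
    unfolding P_def by auto
  have "P dvd t" if "t \<ge> 1" "is_period x t" for t
  proof -
    have "gcd P t \<ge> 1" "is_period x (gcd P t)" using is_period_gcd[OF P(2) that(2)] P(1)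
      by (simp_all add: Suc_le_eq)
    then have "P \<le> gcd P t" unfolding P_def by (simp add: Least_le)
    with P(1) have "gcd P t = P" by (simp add: gcd_le1_nat le_antisym)
    then show ?thesis by (metis gcd_dvd2)
  qed
  with P that show ?thesis by blast
qed

lemma factor_coprime_times_dvd_power:
  "n > 0 \<Longrightarrow> \<exists>a b. n = a * b \<and> coprime a l \<and> b dvd l ^ n"
  for n l :: nat
proof (induction n rule: less_induct)
  case (less n)
  show ?case
  proof (cases "coprime n l")
    case True then show ?thesis by (intro exI[of _ n] exI[of _ 1]) simp
  next
    case False
    define g where "g = gcd n l"
    have "g > 1" using False less.prems unfolding g_def
      by (metis coprime_iff_gcd_eq_1 gcd_pos_nat less_one nat_neq_iff)
    obtain n' where n': "n = g * n'" unfolding g_def by (metis gcd_dvd1 dvdE)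
    with less.prems \<open>g > 1\<close> have "0 < n'" "n' < n" by (auto intro: gr0I)
    then obtain a b where ab: "n' = a * b" "coprime a l" "b dvd l ^ n'" using less.IH by blast
    have "g * b dvd l * l ^ n'" using ab(3) unfolding g_def by (simp add: mult_dvd_mono)
    also have "l * l ^ n' dvd l ^ n" using \<open>n' < n\<close> by (metis Suc_leI le_imp_power_dvd power_Suc)
    finally show ?thesis using ab n' by (intro exI[of _ a] exI[of _ "g * b"]) (simp add: algebra_simps)
  qed
qed

section \<open>The vertices of the graph\<close>

text \<open>\<open>level_class x l h k i r\<close> is the vertex reached from \<open>\<A>\<^sub>i\<close> along the \<open>k\<close> edge
  labels that spell \<open>r\<close> in base \<open>l\<close>.\<close>

definition level_class :: "(int \<Rightarrow> 'a) \<Rightarrow> nat \<Rightarrow> nat \<Rightarrow> nat \<Rightarrow> nat \<Rightarrow> nat \<Rightarrow> 'a set" where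
  "level_class x l h k i r = range (\<lambda>n. x (int (l ^ k) * (int i + n * int h) + int r))"

lemma letter_class_eq_level_class: "letter_class x h i = level_class x l h 0 i 0"
  unfolding letter_class_def level_class_def by auto

lemma edge_target_level_class:
  assumes "two_sided_fixed_point \<sigma> l x" "j < l"
  shows "edge_target \<sigma> j (level_class x l h k i r) = level_class x l h (Suc k) i (l * r + j)"
proof -
  have step: "x (int l * y + int j) = \<sigma> (x y) ! j" for y
    using assms unfolding two_sided_fixed_point_def by blast
  have "\<sigma> (x (int (l ^ k) * (int i + n * int h) + int r)) ! j
      = x (int (l ^ Suc k) * (int i + n * int h) + int (l * r + j))" for n
  proof -
    have "int (l ^ Suc k) * (int i + n * int h) + int (l * r + j)
        = int l * (int (l ^ k) * (int i + n * int h) + int r) + int j"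
      by (simp add: algebra_simps)
    then show ?thesis by (simp only: step)
  qed
  then show ?thesis unfolding edge_target_def level_class_def by (simp add: image_image)
qed

lemma graph_vertex_level_class:
  assumes "two_sided_fixed_point \<sigma> l x"
  shows "C \<in> graph_vertices \<sigma> l x \<Longrightarrow>
    \<exists>k i r. i < height l x \<and> r < l ^ k \<and> C = level_class x l (height l x) k i r"
proof (induction rule: graph_vertices.induct)
  case (base i)
  then show ?case by (intro exI[of _ 0] exI[of _ i] exI[of _ 0]) (simp add: letter_class_eq_level_class)
next
  case (step C j)
  then obtain k i r where "i < height l x" "r < l ^ k" "C = level_class x l (height l x) k i r"
    by blast
  then show ?case using mult_add_less_power_Suc edge_target_level_class[OF assms \<open>j < l\<close>] \<open>j < l\<close>
    by (intro exI[of _ "Suc k"] exI[of _ i] exI[of _ "l * r + j"]) simp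
qed

lemma walk_nth_level_class:
  assumes fp: "two_sided_fixed_point \<sigma> l x" and p: "is_walk \<sigma> l x p"
  shows "t < length p \<Longrightarrow>
    \<exists>k\<ge>t. \<exists>i r. i < height l x \<and> r < l ^ k \<and> p ! t = level_class x l (height l x) k i r"
proof (induction t)
  case 0
  then have "p ! 0 \<in> graph_vertices \<sigma> l x" using p unfolding is_walk_def by (meson nth_mem subsetD)
  then show ?case using graph_vertex_level_class[OF fp] by blast
next
  case (Suc t)
  then obtain k i r where "k \<ge> t" "i < height l x" "r < l ^ k"
      "p ! t = level_class x l (height l x) k i r"
    by auto
  moreover obtain j where "j < l" "p ! Suc t = edge_target \<sigma> j (p ! t)"
    using p Suc.prems unfolding is_walk_def by blast
  ultimately show ?case using mult_add_less_power_Suc edge_target_level_class[OF fp \<open>j < l\<close>]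
    by (intro exI[of _ "Suc k"] conjI exI[of _ i] exI[of _ "l * r + j"]) simp_all
qed

lemma walk_last_level_class:
  assumes "two_sided_fixed_point \<sigma> l x" "is_walk \<sigma> l x p"
  obtains k i r where "k \<ge> walk_length p" "i < height l x" "r < l ^ k"
    "last p = level_class x l (height l x) k i r"
proof -
  have "p \<noteq> []" using assms(2) unfolding is_walk_def by simp
  then show ?thesis
    using that walk_nth_level_class[OF assms, of "length p - 1"]
    by (auto simp: walk_length_def last_conv_nth)
qed

lemma is_walk_snoc_edge:
  assumes p: "is_walk \<sigma> l x p" and "j < l"
  shows "is_walk \<sigma> l x (p @ [edge_target \<sigma> j (last p)])" (is "is_walk \<sigma> l x ?p")
  unfolding is_walk_def
proof (intro conjI allI impI)
  have "last p \<in> graph_vertices \<sigma> l x" using p unfolding is_walk_def by auto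
  then show "set ?p \<subseteq> graph_vertices \<sigma> l x"
    using p graph_vertices.step[OF _ \<open>j < l\<close>] unfolding is_walk_def by auto
  fix t assume t: "Suc t < length ?p"
  show "\<exists>i<l. ?p ! Suc t = edge_target \<sigma> i (?p ! t)"
  proof (cases "Suc t < length p")
    case True
    then show ?thesis using p unfolding is_walk_def by (simp add: nth_append)
  next
    case False
    with t have "t = length p - 1" "Suc t = length p" by simp_all
    moreover have "p \<noteq> []" using p unfolding is_walk_def by simp
    ultimately have "?p ! t = last p" "?p ! Suc t = edge_target \<sigma> j (last p)"
      by (auto simp: nth_append last_conv_nth)
    then show ?thesis using \<open>j < l\<close> by metis
  qed
qed simp

lemma walk_to_level_class:
  assumes fp: "two_sided_fixed_point \<sigma> l x" and "l > 0" and i: "i < height l x"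
  shows "r < l ^ k \<Longrightarrow>
    \<exists>p. is_walk \<sigma> l x p \<and> walk_length p = k \<and> last p = level_class x l (height l x) k i r"
proof (induction k arbitrary: r)
  case 0
  have "letter_class x (height l x) i \<in> graph_vertices \<sigma> l x" using i by (rule graph_vertices.base)
  then show ?case using 0
    by (intro exI[of _ "[letter_class x (height l x) i]"])
      (simp add: is_walk_def walk_length_def letter_class_eq_level_class)
next
  case (Suc k)
  obtain r' j where r: "r = l * r' + j" "r' < l ^ k" "j < l"
    using less_power_SucE[OF \<open>l > 0\<close> Suc.prems] .
  then obtain p where p: "is_walk \<sigma> l x p" "walk_length p = k"
    "last p = level_class x l (height l x) k i r'"
    using Suc.IH by blast
  then have "p \<noteq> []" unfolding is_walk_def by simp
  then show ?case
    using is_walk_snoc_edge[OF p(1) \<open>j < l\<close>] p edge_target_level_class[OF fp \<open>j < l\<close>] r(1)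
    by (intro exI[of _ "p @ [edge_target \<sigma> j (last p)]"]) (auto simp: walk_length_def)
qed

lemma level_class_eq_singleton:
  assumes "is_period x (l ^ k * h)"
  shows "level_class x l h k i r = {x (int (l ^ k) * int i + int r)}"
proof -
  have "x (int (l ^ k) * (int i + n * int h) + int r) = x (int (l ^ k) * int i + int r)" for n
  proof -
    have "int (l ^ k) * (int i + n * int h) + int r
        = (int (l ^ k) * int i + int r) + n * int (l ^ k * h)"
      by (simp add: algebra_simps)
    moreover have "x ((int (l ^ k) * int i + int r) + n * int (l ^ k * h))
        = x (int (l ^ k) * int i + int r)"
      by (rule is_period_shift[OF assms])
    ultimately show ?thesis by (simp only:)
  qed
  then show ?thesis unfolding level_class_def by auto
qed

lemma is_period_if_level_classes_singleton:
  assumes "l > 0" "h > 0"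
    and single: "\<And>i r. i < h \<Longrightarrow> r < l ^ k \<Longrightarrow> card (level_class x l h k i r) = 1"
  shows "is_period x (l ^ k * h)"
  unfolding is_period_def
proof
  fix m
  define L where "L = int (l ^ k)"
  define i where "i = (m div L) mod int h"
  define n where "n = (m div L) div int h"
  define r where "r = m mod L"
  have "L > 0" unfolding L_def using \<open>l > 0\<close> by simp
  then have r: "0 \<le> r" "nat r < l ^ k" unfolding r_def L_def by (simp_all add: nat_less_iff)
  have "0 \<le> i" "i < int h" unfolding i_def using \<open>h > 0\<close> by simp_all
  then have i: "0 \<le> i" "nat i < h" by simp_all
  have mem: "x (L * (i + c * int h) + r) \<in> level_class x l h k (nat i) (nat r)" for c
    unfolding level_class_def L_def using i r by (intro range_eqI[of _ _ c]) simp
  have "m div L = i + n * int h" unfolding i_def n_def by simp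
  moreover have "m = L * (m div L) + r" unfolding r_def by simp
  ultimately have m: "m = L * (i + n * int h) + r" by simp
  then have "m + int (l ^ k * h) = L * (i + (n + 1) * int h) + r"
    unfolding L_def by (simp add: algebra_simps)
  with m mem[of n] mem[of "n + 1"] single[OF i(2) r(2)] show "x (m + int (l ^ k * h)) = x m"
    by (metis card_1_singletonE singletonD)
qed

section \<open>The height\<close>

lemma g0_pos:
  assumes "l > 0" "constant_length \<sigma> l" "primitive \<sigma>" "two_sided_fixed_point \<sigma> l x"
  shows "g0 x > 0"
proof -
  obtain k where "\<forall>a b. b \<in> set (subst_iter \<sigma> k a)"
    using assms(3) unfolding primitive_def by blast
  then obtain r where r: "r < length (subst_iter \<sigma> k (x 1))" "subst_iter \<sigma> k (x 1) ! r = x 0"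
    by (meson in_set_conv_nth)
  then have "x (int (l ^ k + r)) = x 0"
    using two_sided_fixed_point_subst_iter[OF assms(2,4,1), of r k 1]
    by (simp add: length_subst_iter[OF assms(2)])
  moreover have "l ^ k + r \<ge> 1" using \<open>l > 0\<close> by (simp add: Suc_le_eq)
  ultimately have "g0 x dvd l ^ k + r" unfolding g0_def by (intro Gcd_dvd) simp
  with \<open>l ^ k + r \<ge> 1\<close> show ?thesis by (auto intro: gr0I)
qed

lemma
  assumes "g0 x > 0"
  shows height_pos: "height l x > 0"
    and coprime_height: "coprime (height l x) l"
    and height_dvd_g0: "height l x dvd g0 x"
    and le_height: "n \<ge> 1 \<Longrightarrow> coprime n l \<Longrightarrow> n dvd g0 x \<Longrightarrow> n \<le> height l x"
proof -
  define H where "H = {n::nat. n \<ge> 1 \<and> gcd n l = 1 \<and> n dvd g0 x}"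
  have "H \<subseteq> {..g0 x}" unfolding H_def using assms by (auto dest: dvd_imp_le)
  then have "finite H" by (rule finite_subset) simp
  have "height l x = Max H" unfolding height_def H_def ..
  moreover have "1 \<in> H" unfolding H_def by simp
  ultimately have "height l x \<in> H" using Max_in[OF \<open>finite H\<close>] by auto
  then show "height l x > 0" "coprime (height l x) l" "height l x dvd g0 x"
    unfolding H_def coprime_iff_gcd_eq_1 by simp_all
  show "n \<le> height l x" if "n \<ge> 1" "coprime n l" "n dvd g0 x"
  proof -
    have "n \<in> H" using that unfolding H_def coprime_iff_gcd_eq_1 by simp
    then show ?thesis using Max_ge[OF \<open>finite H\<close>] \<open>height l x = Max H\<close> by simp
  qed
qed

lemma dvd_height:
  assumes "g0 x > 0" "coprime a l" "a dvd g0 x"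
  shows "a dvd height l x"
proof -
  let ?h = "height l x"
  have "a \<noteq> 0" using assms(1,3) by (rule_tac notI) simp
  then have pos: "lcm a ?h > 0" using height_pos[OF assms(1)] by (simp add: lcm_pos_nat)
  have "lcm a ?h dvd a * ?h" by (simp add: lcm_least)
  moreover have "coprime (a * ?h) l" using assms(2) coprime_height[OF assms(1)] by simp
  ultimately have "coprime (lcm a ?h) l" by (rule coprime_divisors[OF _ dvd_refl])
  moreover have "lcm a ?h dvd g0 x" using assms(3) height_dvd_g0[OF assms(1)] by (rule lcm_least)
  ultimately have "lcm a ?h \<le> ?h" using pos by (intro le_height[OF assms(1)]) simp_all
  moreover have "?h \<le> lcm a ?h" using pos by (intro dvd_imp_le) simp_all
  ultimately have "lcm a ?h = ?h" by (rule antisym)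
  then show ?thesis by (metis dvd_lcm1)
qed


lemma return_time_period:
  assumes cl: "constant_length \<sigma> l" and fp: "two_sided_fixed_point \<sigma> l x" and "l \<ge> 2"
    and P: "is_period x P" "P \<ge> 1" and n: "x (int n) = x 0"
  shows "is_period x (l ^ P * n)"
  unfolding is_period_def
proof
  fix m
  define s where "s = nat (m mod int P)"
  have "s < P" unfolding s_def using P(2) by (simp add: nat_less_iff)
  also have "P < 2 ^ P" by (rule less_exp)
  also have "\<dots> \<le> l ^ P" using \<open>l \<ge> 2\<close> by (rule power_mono) simp
  finally have s: "s < l ^ P" .
  have m: "m = int s + (m div int P) * int P" unfolding s_def using P(2) by simp
  have fp_P: "x (int (l ^ P) * j + int s) = subst_iter \<sigma> P (x j) ! s" for j
    using two_sided_fixed_point_subst_iter[OF cl fp _ s] \<open>l \<ge> 2\<close> by simp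
  have "x (m + int (l ^ P * n)) = x ((int (l ^ P) * int n + int s) + (m div int P) * int P)"
    by (subst m) (simp add: algebra_simps)
  also have "\<dots> = x (int (l ^ P) * int n + int s)" by (rule is_period_shift[OF P(1)])
  also have "\<dots> = x (int (l ^ P) * 0 + int s)" unfolding fp_P n ..
  also have "\<dots> = x m" using is_period_shift[OF P(1), of "int s" "m div int P"] m by simp
  finally show "x (m + int (l ^ P * n)) = x m" .
qed

lemma least_period_dvd_height_mult_power:
  assumes cl: "constant_length \<sigma> l" and fp: "two_sided_fixed_point \<sigma> l x" and "l \<ge> 2"
    and "g0 x > 0" and P: "is_period x P" "P \<ge> 1"
    and least: "\<And>t. t \<ge> 1 \<Longrightarrow> is_period x t \<Longrightarrow> P dvd t"
  shows "P dvd height l x * l ^ P"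
proof -
  obtain a b where ab: "P = a * b" "coprime a l" "b dvd l ^ P"
    using factor_coprime_times_dvd_power[of P l] P(2) by auto
  have "a dvd n" if "n \<in> {n. n \<ge> 1 \<and> x (int n) = x 0}" for n
  proof -
    have "P dvd l ^ P * n"
      using that \<open>l \<ge> 2\<close> by (intro least return_time_period[OF cl fp _ P]) auto
    then have "a dvd l ^ P * n" using ab(1) by (metis dvd_mult_left)
    then show ?thesis using ab(2) by (simp add: coprime_dvd_mult_right_iff)
  qed
  then have "a dvd g0 x" unfolding g0_def by (rule Gcd_greatest)
  then have "a dvd height l x" using \<open>g0 x > 0\<close> ab(2) by (intro dvd_height)
  then show ?thesis using ab(1,3) by (simp add: mult_dvd_mono)
qed


lemma periodic_if_long_walks_end_in_singletons:
  assumes fp: "two_sided_fixed_point \<sigma> l x" and "l > 0" and "g0 x > 0"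
    and N: "\<And>p. is_walk \<sigma> l x p \<Longrightarrow> walk_length p \<ge> N \<Longrightarrow> card (last p) = 1"
  shows "periodic x"
proof -
  have "is_period x (l ^ N * height l x)"
  proof (rule is_period_if_level_classes_singleton)
    fix i r assume "i < height l x" "r < l ^ N"
    then obtain p where p: "is_walk \<sigma> l x p" "walk_length p = N"
        "last p = level_class x l (height l x) N i r"
      using walk_to_level_class[OF fp \<open>l > 0\<close>] by blast
    show "card (level_class x l (height l x) N i r) = 1" using N[OF p(1)] p(2,3) by simp
  qed (use \<open>l > 0\<close> height_pos[OF \<open>g0 x > 0\<close>] in auto)
  moreover have "l ^ N * height l x > 0" using \<open>l > 0\<close> height_pos[OF \<open>g0 x > 0\<close>] by simp
  ultimately show ?thesis by (rule periodic_if_is_period)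
qed

lemma long_walks_end_in_singletons_if_periodic:
  assumes cl: "constant_length \<sigma> l" and fp: "two_sided_fixed_point \<sigma> l x" and "l \<ge> 2"
    and "g0 x > 0" and "periodic x"
  shows "\<exists>N. \<forall>p. is_walk \<sigma> l x p \<and> walk_length p \<ge> N \<longrightarrow> card (last p) = 1"
proof -
  obtain P where P: "P \<ge> 1" "is_period x P" and least: "\<And>t. t \<ge> 1 \<Longrightarrow> is_period x t \<Longrightarrow> P dvd t"
    using periodic_least_period[OF \<open>periodic x\<close>] by metis
  have "card (last p) = 1" if p: "is_walk \<sigma> l x p" "walk_length p \<ge> P" for p
  proof -
    obtain k i r where k: "k \<ge> walk_length p" "last p = level_class x l (height l x) k i r"
      by (rule walk_last_level_class[OF fp p(1)])
    have "l ^ P dvd l ^ k" using k(1) p(2) by (intro le_imp_power_dvd) simp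
    then have "height l x * l ^ P dvd l ^ k * height l x"
      by (metis mult.commute mult_dvd_mono dvd_refl)
    with least_period_dvd_height_mult_power[OF cl fp \<open>l \<ge> 2\<close> \<open>g0 x > 0\<close> P(2,1) least]
    have "P dvd l ^ k * height l x" by (rule dvd_trans)
    then have "is_period x (l ^ k * height l x)" by (rule is_period_multiple[OF P(2)])
    then show ?thesis using k(2) by (simp add: level_class_eq_singleton)
  qed
  then show ?thesis by blast
qed

theorem mainTheorem17:
  fixes \<sigma> :: "'a::finite \<Rightarrow> 'a list" and l :: nat and x :: "int \<Rightarrow> 'a"
  assumes "l \<ge> 2"
    and "constant_length \<sigma> l"
    and "primitive \<sigma>"
    and "two_sided_fixed_point \<sigma> l x"
    and "admissible \<sigma> x"
  shows "(\<exists>N. \<forall>p. is_walk \<sigma> l x p \<and> walk_length p \<ge> N \<longrightarrow> card (last p) = 1)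
         \<longleftrightarrow> periodic x"
proof -
  have "l > 0" using assms(1) by simp
  \<comment> \<open>Primitivity only ensures \<open>g\<^sub>0 \<noteq> 0\<close>.\<close>
  then have "g0 x > 0" using g0_pos assms(2-4) by blast
  show ?thesis
  proof
    assume "\<exists>N. \<forall>p. is_walk \<sigma> l x p \<and> walk_length p \<ge> N \<longrightarrow> card (last p) = 1"
    then show "periodic x"
      using periodic_if_long_walks_end_in_singletons[OF assms(4) \<open>l > 0\<close> \<open>g0 x > 0\<close>] by blast
  next
    assume "periodic x"
    then show "\<exists>N. \<forall>p. is_walk \<sigma> l x p \<and> walk_length p \<ge> N \<longrightarrow> card (last p) = 1"
      using long_walks_end_in_singletons_if_periodic[OF assms(2,4,1) \<open>g0 x > 0\<close>] by blast
  qed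
qed

end
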